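(* Let $\nu\in\mathbb{Z}_{\ge0}\cup\{\infty\}$ be a changepoint, $T$ a random sequence length and $\tau$ a detection time; let $\Delta\tau:=\tau-\nu$, $\Delta T:=T-\nu$ and $\Delta T^*_{\max}:=\inf\{t\mid P(\Delta T\le t)=1\}<\infty$. Assume (independent censoring) that conditionally on $\{\nu<\infty,\Delta\tau\ge0\}$, $\Delta\tau$ and $\Delta T$ are independent. Then $$\mathbb{E}[\Delta\tau\mid\nu<\infty,\ 0\le\Delta\tau\le\Delta T^*_{\max}]-\mathbb{E}[\Delta\tau\mid\nu<\infty,\ 0\le\Delta\tau\le\Delta T]\ge0.$$
   Context: $\tau$ is the detection time of an online changepoint detector; all conditional expectations are assumed well defined (conditioning events of positive probability). *)

theory Defs
  imports "HOL-Probability.Probability"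
begin

definition delta :: "('a \<Rightarrow> enat) \<Rightarrow> ('a \<Rightarrow> enat) \<Rightarrow> 'a \<Rightarrow> ereal" where
  "delta X \<nu> \<omega> = ereal_of_enat (X \<omega>) - ereal_of_enat (\<nu> \<omega>)"

definition cond_exp_event :: "'a measure \<Rightarrow> ('a \<Rightarrow> real) \<Rightarrow> 'a set \<Rightarrow> real" where
  "cond_exp_event M X A = (\<integral>\<omega>. indicator A \<omega> * X \<omega> \<partial>M) / measure M A"

definition dT_max :: "'a measure \<Rightarrow> ('a \<Rightarrow> ereal) \<Rightarrow> ereal" where
  "dT_max M D = Inf {t::ereal. measure M {\<omega> \<in> space M. D \<omega> \<le> t} = 1}"

end

theory Submission
  imports Defs
begin

(* Let c be the mean of tau - nu on {0 <= tau - nu <= m}, where m = dT_max.  Cutting tau - nu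
   off at a lower level y <= m can only lower its mean, since the discarded mass lies above y and
   the retained mass below it: E[(c - (tau - nu)); 0 <= tau - nu <= y] >= 0.  As T - nu <= m almost
   surely and T - nu is independent of tau - nu given {nu < oo, tau - nu >= 0}, Fubini writes
   E[(c - (tau - nu)); 0 <= tau - nu <= T - nu] as the average of these nonnegative quantities over
   the law of T - nu, so E[tau - nu | 0 <= tau - nu <= T - nu] <= c. *)

lemma set_integrable_const:
  fixes c :: real
  assumes "A \<in> sets M" "emeasure M A \<noteq> \<infinity>"
  shows "set_integrable M A (\<lambda>_. c)"
  unfolding set_integrable_def
  by (intro integrable_scaleR_left integrable_indicator) (use assms in \<open>auto simp: less_top\<close>)

lemma cond_exp_event_eq_set_integral:
  "cond_exp_event M X A = (LINT \<omega>:A|M. X \<omega>) / measure M A"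
  by (simp add: cond_exp_event_def set_lebesgue_integral_def)

lemma integral_uniform_measure:
  fixes f :: "'a \<Rightarrow> real"
  assumes A: "A \<in> sets M" "emeasure M A \<noteq> 0" "emeasure M A \<noteq> \<infinity>"
    and f: "f \<in> borel_measurable M"
  shows "integral\<^sup>L (uniform_measure M A) f = (LINT x:A|M. f x) / measure M A"
proof -
  have "0 < measure M A"
    using A by (simp add: zero_less_measure_iff emeasure_eq_ennreal_measure)
  then have "1 / ennreal (measure M A) = ennreal (1 / measure M A)"
    using divide_ennreal[of 1 "measure M A"] by simp
  then have density: "indicator A x / emeasure M A = ennreal (indicator A x / measure M A)" for x
    using A by (cases "x \<in> A") (simp_all add: emeasure_eq_ennreal_measure)
  have "integral\<^sup>L (uniform_measure M A) f = (\<integral>x. (indicator A x / measure M A) *\<^sub>R f x \<partial>M)"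
    unfolding uniform_measure_def density by (rule integral_density) (use A f in auto)
  also have "\<dots> = (\<integral>x. indicator A x *\<^sub>R f x \<partial>M) / measure M A"
    by (simp add: integral_divide_zero)
  finally show ?thesis
    by (simp add: set_lebesgue_integral_def)
qed

lemma cond_exp_event_uniform_measure:
  fixes X :: "'a \<Rightarrow> real"
  assumes A: "A \<in> sets M" "emeasure M A \<noteq> 0" "emeasure M A \<noteq> \<infinity>"
    and B: "B \<in> sets M" and X: "X \<in> borel_measurable M"
  shows "cond_exp_event (uniform_measure M A) X B = cond_exp_event M X (A \<inter> B)"
proof -
  have "0 < measure M A"
    using A by (simp add: zero_less_measure_iff emeasure_eq_ennreal_measure)
  moreover have "(LINT x:B|uniform_measure M A. X x) = (LINT x:A \<inter> B|M. X x) / measure M A"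
    using A B X
    by (simp add: integral_uniform_measure set_lebesgue_integral_def indicator_inter_arith mult.assoc)
  ultimately show ?thesis
    using A B by (simp add: cond_exp_event_eq_set_integral)
qed

lemma set_integral_sublevel_le_cond_exp_event:
  fixes X :: "'a \<Rightarrow> real"
  assumes B: "B \<in> sets M" "0 < measure M B"
    and X: "X \<in> borel_measurable M" "set_integrable M B X"
  shows "(LINT \<omega>:{\<omega>\<in>B. X \<omega> \<le> y}|M. X \<omega>) \<le> measure M {\<omega>\<in>B. X \<omega> \<le> y} * cond_exp_event M X B"
proof -
  define S where "S = {\<omega>\<in>B. X \<omega> \<le> y}"
  define R where "R = {\<omega>\<in>B. y < X \<omega>}"
  note [measurable] = B(1) X(1)
  have sets: "S \<in> sets M" "R \<in> sets M"
    unfolding S_def R_def by measurable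
  have "emeasure M B \<noteq> \<infinity>"
    using B(2) by (auto simp: measure_def)
  then have fin: "emeasure M S \<noteq> \<infinity>" "emeasure M R \<noteq> \<infinity>"
    using emeasure_mono[of S B M] emeasure_mono[of R B M] B(1)
    by (auto simp: S_def R_def top_unique)
  have int: "set_integrable M S X" "set_integrable M R X"
    using set_integrable_subset[OF X(2)] sets by (auto simp: S_def R_def)
  have const_int: "set_integrable M S (\<lambda>_. y)" "set_integrable M R (\<lambda>_. y)"
    using sets fin by (simp_all add: set_integrable_const)
  have split: "B = S \<union> R" "S \<inter> R = {}"
    by (auto simp: S_def R_def)
  define s t a b where "s = measure M S" and "t = measure M R"
    and "a = (LINT \<omega>:S|M. X \<omega>)" and "b = (LINT \<omega>:R|M. X \<omega>)"
  have "a \<le> (LINT \<omega>:S|M. y)"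
    unfolding a_def by (rule set_integral_mono[OF int(1) const_int(1)]) (simp add: S_def)
  then have a_le: "a \<le> s * y"
    using sets fin by (simp add: set_integral_const s_def)
  have "(LINT \<omega>:R|M. y) \<le> b"
    unfolding b_def by (rule set_integral_mono[OF const_int(2) int(2)]) (simp add: R_def)
  then have b_ge: "t * y \<le> b"
    using sets fin by (simp add: set_integral_const t_def)
  have B_eq: "measure M B = s + t" "(LINT \<omega>:B|M. X \<omega>) = a + b"
    unfolding s_def t_def a_def b_def split(1)
    using sets fin int split(2) by (simp_all add: measure_Union set_integral_Un)
  have "a * t \<le> s * y * t"
    using a_le by (simp add: mult_right_mono t_def)
  also have "\<dots> = s * (t * y)"
    by simp
  also have "\<dots> \<le> s * b"
    using b_ge by (simp add: mult_left_mono s_def)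
  finally have "a * t \<le> s * b" .
  then have "a * (s + t) \<le> s * (a + b)"
    by (simp add: algebra_simps)
  then show ?thesis
    using B(2) B_eq by (simp add: cond_exp_event_eq_set_integral S_def[symmetric] a_def[symmetric] s_def[symmetric] field_simps)
qed

lemma (in prob_space) expectation_indep_var_iterated:
  fixes g :: "'b \<Rightarrow> 'b \<Rightarrow> real"
  assumes indep: "indep_var S X T Y"
    and g: "(\<lambda>(x, y). g x y) \<in> borel_measurable (S \<Otimes>\<^sub>M T)"
    and bounded: "\<And>x y. \<bar>g x y\<bar> \<le> C"
  shows "expectation (\<lambda>\<omega>. g (X \<omega>) (Y \<omega>)) = (\<integral>y. expectation (\<lambda>\<omega>. g (X \<omega>) y) \<partial>distr M T Y)"
proof -
  have X: "random_variable S X" and Y: "random_variable T Y"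
    using indep by (auto elim: indep_var_rv1 indep_var_rv2)
  interpret PX: prob_space "distr M S X"
    by (rule prob_space_distr[OF X])
  interpret PY: prob_space "distr M T Y"
    by (rule prob_space_distr[OF Y])
  interpret PXY: pair_prob_space "distr M S X" "distr M T Y" ..
  have joint: "distr M S X \<Otimes>\<^sub>M distr M T Y = distr M (S \<Otimes>\<^sub>M T) (\<lambda>\<omega>. (X \<omega>, Y \<omega>))"
    using indep by (simp add: indep_var_distribution_eq)
  have int: "integrable (distr M S X \<Otimes>\<^sub>M distr M T Y) (\<lambda>(x, y). g x y)"
    by (rule PXY.P.integrable_const_bound[where B=C])
       (use bounded g in \<open>auto simp: measurable_cong_sets[OF sets_pair_measure_cong[OF sets_distr sets_distr]]\<close>)
  have inner: "(\<integral>x. g x y \<partial>distr M S X) = expectation (\<lambda>\<omega>. g (X \<omega>) y)" if "y \<in> space T" for y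
  proof -
    have "(\<lambda>x. g x y) \<in> borel_measurable S"
      using measurable_compose[OF measurable_Pair2'[OF that] g] by simp
    then show ?thesis
      using X by (subst integral_distr) auto
  qed
  have "expectation (\<lambda>\<omega>. g (X \<omega>) (Y \<omega>))
      = (\<integral>z. (\<lambda>(x, y). g x y) z \<partial>distr M (S \<Otimes>\<^sub>M T) (\<lambda>\<omega>. (X \<omega>, Y \<omega>)))"
    using X Y g by (subst integral_distr) auto
  also have "\<dots> = (\<integral>y. (\<integral>x. g x y \<partial>distr M S X) \<partial>distr M T Y)"
    unfolding joint[symmetric] by (rule PXY.integral_snd[OF int, symmetric])
  also have "\<dots> = (\<integral>y. expectation (\<lambda>\<omega>. g (X \<omega>) y) \<partial>distr M T Y)"
    by (rule Bochner_Integration.integral_cong) (simp_all add: inner)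
  finally show ?thesis .
qed

lemma (in finite_measure) set_integrable_real_of_ereal:
  fixes X :: "'a \<Rightarrow> ereal"
  assumes "A \<in> sets M" "X \<in> borel_measurable M"
    and bounded: "AE \<omega>\<in>A in M. 0 \<le> X \<omega> \<and> X \<omega> \<le> ereal m"
  shows "set_integrable M A (\<lambda>\<omega>. real_of_ereal (X \<omega>))"
proof (rule set_integrable_bound[where f="\<lambda>_. m"])
  show "set_integrable M A (\<lambda>_. m)"
    using assms(1) by (simp add: set_integrable_const)
  show "set_borel_measurable M A (\<lambda>\<omega>. real_of_ereal (X \<omega>))"
    using assms(1,2) unfolding set_borel_measurable_def by measurable
  have "norm (real_of_ereal x) \<le> norm m" if "0 \<le> x" "x \<le> ereal m" for x
    using that by (cases x) auto
  then show "AE \<omega> in M. \<omega> \<in> A \<longrightarrow> norm (real_of_ereal (X \<omega>)) \<le> norm m"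
    using bounded by auto
qed

lemma (in prob_space) set_integral_truncation_le_cond_exp_event:
  fixes X :: "'a \<Rightarrow> ereal"
  defines "S \<equiv> \<lambda>y. {\<omega>\<in>space M. 0 \<le> X \<omega> \<and> X \<omega> \<le> y}"
  assumes X: "X \<in> borel_measurable M" and pos: "0 < prob (S m)" and "m < \<infinity>" and "y \<le> m"
  shows "(LINT \<omega>:S y|M. real_of_ereal (X \<omega>))
      \<le> prob (S y) * cond_exp_event M (\<lambda>\<omega>. real_of_ereal (X \<omega>)) (S m)"
proof (cases "0 \<le> y")
  case False
  then have "S y = {}"
    unfolding S_def using order_trans by blast
  then show ?thesis
    by (simp add: set_lebesgue_integral_def)
next
  case True
  with \<open>y \<le> m\<close> \<open>m < \<infinity>\<close> obtain y' m' where y': "y = ereal y'" and m': "m = ereal m'"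
    by (cases y; cases m) auto
  have "x \<le> ereal y' \<longleftrightarrow> x \<le> ereal m' \<and> real_of_ereal x \<le> y'" if "0 \<le> x" for x
    using that \<open>y \<le> m\<close> unfolding y' m' by (cases x) auto
  then have "S y = {\<omega>\<in>S m. real_of_ereal (X \<omega>) \<le> y'}"
    unfolding S_def y' m' by auto
  moreover have "set_integrable M (S m) (\<lambda>\<omega>. real_of_ereal (X \<omega>))"
    by (rule set_integrable_real_of_ereal[where m=m']) (use X in \<open>auto simp: S_def m'\<close>)
  moreover have "S m \<in> events"
    using X unfolding S_def by measurable
  ultimately show ?thesis
    using set_integral_sublevel_le_cond_exp_event[of "S m" M "\<lambda>\<omega>. real_of_ereal (X \<omega>)" y'] pos X
    by simp
qed

lemma (in prob_space) cond_exp_event_indep_truncation_le: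
  fixes X Y :: "'a \<Rightarrow> ereal"
  defines "S \<equiv> \<lambda>y. {\<omega>\<in>space M. 0 \<le> X \<omega> \<and> X \<omega> \<le> y}"
  assumes indep: "indep_var borel X borel Y"
    and Y_le: "AE \<omega> in M. Y \<omega> \<le> m" and "m < \<infinity>" and pos: "0 < prob (S m)"
  shows "cond_exp_event M (\<lambda>\<omega>. real_of_ereal (X \<omega>)) {\<omega>\<in>space M. 0 \<le> X \<omega> \<and> X \<omega> \<le> Y \<omega>}
      \<le> cond_exp_event M (\<lambda>\<omega>. real_of_ereal (X \<omega>)) (S m)"
proof -
  have [measurable]: "X \<in> borel_measurable M" "Y \<in> borel_measurable M"
    using indep by (auto elim: indep_var_rv1 indep_var_rv2)
  define Xr where "Xr = (\<lambda>\<omega>. real_of_ereal (X \<omega>))"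
  define B where "B = {\<omega>\<in>space M. 0 \<le> X \<omega> \<and> X \<omega> \<le> Y \<omega>}"
  define c where "c = cond_exp_event M Xr (S m)"
  have [measurable]: "B \<in> events" "S y \<in> events" for y
    unfolding B_def S_def by measurable
  have "S m \<noteq> {}"
    using pos by auto
  with \<open>m < \<infinity>\<close> obtain m' where m': "m = ereal m'"
    unfolding S_def by (cases m) auto
  have "0 \<le> c"
    unfolding c_def cond_exp_event_eq_set_integral set_lebesgue_integral_def
    by (intro divide_nonneg_nonneg Bochner_Integration.integral_nonneg)
       (auto simp: S_def Xr_def indicator_def real_of_ereal_pos)
  define g where "g x y = (if 0 \<le> x \<and> x \<le> y \<and> y \<le> m then c - real_of_ereal x else 0)" for x y
  have inner: "0 \<le> expectation (\<lambda>\<omega>. g (X \<omega>) y)" for y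
  proof (cases "y \<le> m")
    case True
    have "(LINT \<omega>:S y|M. Xr \<omega>) \<le> prob (S y) * c"
      using set_integral_truncation_le_cond_exp_event[of X m y] pos \<open>m < \<infinity>\<close> True
      by (simp add: c_def Xr_def S_def)
    moreover have "expectation (\<lambda>\<omega>. g (X \<omega>) y) = (LINT \<omega>:S y|M. c - Xr \<omega>)"
      unfolding set_lebesgue_integral_def
      by (intro Bochner_Integration.integral_cong) (auto simp: g_def S_def Xr_def True indicator_def)
    moreover have "set_integrable M (S y) Xr"
      unfolding Xr_def using True by (intro set_integrable_real_of_ereal[where m=m']) (auto simp: S_def m')
    ultimately show ?thesis
      by (simp add: set_integral_const set_integrable_const)
  qed (simp add: g_def)
  have g_measurable: "(\<lambda>(x, y). g x y) \<in> borel_measurable (borel \<Otimes>\<^sub>M borel)"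
    unfolding g_def by measurable
  have g_bounded: "\<bar>g x y\<bar> \<le> \<bar>c\<bar> + \<bar>m'\<bar>" for x y
  proof (cases "0 \<le> x \<and> x \<le> y \<and> y \<le> m")
    case True
    then have "0 \<le> x" "x \<le> ereal m'"
      unfolding m' by (auto intro: order_trans)
    then have "0 \<le> real_of_ereal x" "real_of_ereal x \<le> m'"
      by (cases x; simp)+
    with True show ?thesis
      unfolding g_def by simp
  qed (auto simp: g_def)
  have "0 \<le> expectation (\<lambda>\<omega>. g (X \<omega>) (Y \<omega>))"
    unfolding expectation_indep_var_iterated[OF indep g_measurable g_bounded]
    by (rule Bochner_Integration.integral_nonneg) (rule inner)
  also have "expectation (\<lambda>\<omega>. g (X \<omega>) (Y \<omega>)) = (LINT \<omega>:B|M. c - Xr \<omega>)"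
    unfolding set_lebesgue_integral_def using Y_le
    by (intro integral_cong_AE) (auto simp: g_def B_def Xr_def indicator_def)
  also have "\<dots> = prob B * c - (LINT \<omega>:B|M. Xr \<omega>)"
  proof -
    have "AE \<omega>\<in>B in M. 0 \<le> X \<omega> \<and> X \<omega> \<le> ereal m'"
      using Y_le by eventually_elim (auto simp: B_def m')
    then have "set_integrable M B Xr"
      unfolding Xr_def by (intro set_integrable_real_of_ereal) auto
    then show ?thesis
      by (simp add: set_integral_const set_integrable_const)
  qed
  finally have "(LINT \<omega>:B|M. Xr \<omega>) \<le> prob B * c"
    by simp
  then have "cond_exp_event M Xr B \<le> c"
    using \<open>0 \<le> c\<close> by (cases "prob B = 0") (auto simp: cond_exp_event_eq_set_integral divide_le_eq mult.commute)
  then show ?thesis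
    by (simp add: c_def Xr_def B_def)
qed

lemma (in prob_space) cond_exp_event_indep_truncation_le_within:
  fixes A :: "'a set" and X Y :: "'a \<Rightarrow> ereal"
  defines "S \<equiv> \<lambda>Z. A \<inter> {\<omega>\<in>space M. 0 \<le> X \<omega> \<and> X \<omega> \<le> Z \<omega>}"
  assumes A: "A \<in> events"
    and indep: "prob_space.indep_var (uniform_measure M A) borel X borel Y"
    and Y_le: "AE \<omega> in M. Y \<omega> \<le> m" and "m < \<infinity>" and pos: "0 < prob (S (\<lambda>_. m))"
  shows "cond_exp_event M (\<lambda>\<omega>. real_of_ereal (X \<omega>)) (S Y)
      \<le> cond_exp_event M (\<lambda>\<omega>. real_of_ereal (X \<omega>)) (S (\<lambda>_. m))"
proof -
  define P where "P = uniform_measure M A"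
  have "prob (S (\<lambda>_. m)) \<le> prob A"
    unfolding S_def using A by (intro finite_measure_mono) auto
  then have A_pos: "0 < prob A" "emeasure M A \<noteq> 0"
    using pos by (simp_all add: emeasure_eq_measure)
  interpret P: prob_space P
    unfolding P_def using A_pos by (simp add: prob_space_uniform_measure)
  have [measurable]: "X \<in> borel_measurable M" "Y \<in> borel_measurable M"
    using P.indep_var_rv1[OF indep[folded P_def]] P.indep_var_rv2[OF indep[folded P_def]]
    by (simp_all add: P_def cong: measurable_cong_sets)
  have "AE \<omega> in P. Y \<omega> \<le> m"
    unfolding P_def using Y_le by (intro AE_uniform_measureI A) (auto elim: AE_mp)
  moreover have "0 < P.prob {\<omega>\<in>space P. 0 \<le> X \<omega> \<and> X \<omega> \<le> m}"
    using pos A_pos A unfolding S_def by (simp add: P_def)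
  ultimately have "cond_exp_event P (\<lambda>\<omega>. real_of_ereal (X \<omega>)) {\<omega>\<in>space P. 0 \<le> X \<omega> \<and> X \<omega> \<le> Y \<omega>}
      \<le> cond_exp_event P (\<lambda>\<omega>. real_of_ereal (X \<omega>)) {\<omega>\<in>space P. 0 \<le> X \<omega> \<and> X \<omega> \<le> m}"
    using indep \<open>m < \<infinity>\<close> unfolding P_def by (intro P.cond_exp_event_indep_truncation_le[unfolded P_def])
  moreover have "{\<omega>\<in>space M. 0 \<le> X \<omega> \<and> X \<omega> \<le> Y \<omega>} \<in> events"
    "{\<omega>\<in>space M. 0 \<le> X \<omega> \<and> X \<omega> \<le> m} \<in> events"
    "(\<lambda>\<omega>. real_of_ereal (X \<omega>)) \<in> borel_measurable M"
    by measurable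
  ultimately show ?thesis
    unfolding P_def S_def space_uniform_measure
    by (simp add: cond_exp_event_uniform_measure[OF A A_pos(2)])
qed

lemma measurable_delta [measurable]:
  assumes "X \<in> M \<rightarrow>\<^sub>M count_space UNIV" "Y \<in> M \<rightarrow>\<^sub>M count_space UNIV"
  shows "delta X Y \<in> borel_measurable M"
  unfolding delta_def[abs_def]
  by (rule measurable_compose_countable'[where g=X and I=UNIV, OF _ assms(1)],
      rule measurable_compose_countable'[where g=Y and I=UNIV, OF _ assms(2)]) auto

lemma AE_le_dT_max:
  assumes "prob_space M"
  shows "AE \<omega> in M. D \<omega> \<le> dT_max M D"
proof (cases "{t. measure M {\<omega> \<in> space M. D \<omega> \<le> t} = 1} = {}")
  case True
  then show ?thesis by (simp add: dT_max_def)
next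
  case False
  then obtain f :: "nat \<Rightarrow> ereal"
    where f: "range f \<subseteq> {t. measure M {\<omega> \<in> space M. D \<omega> \<le> t} = 1}"
      and Inf: "dT_max M D = (INF i. f i)"
    using Inf_countable_INF[OF False] unfolding dT_max_def by auto
  have "AE \<omega> in M. D \<omega> \<le> f i" for i
  proof -
    have "measure M {\<omega> \<in> space M. D \<omega> \<le> f i} = 1"
      using f by auto
    from prob_space.AE_prob_1[OF assms this] show ?thesis
      by eventually_elim simp
  qed
  then have "AE \<omega> in M. \<forall>i. D \<omega> \<le> f i"
    by (simp add: AE_all_countable)
  then show ?thesis
    unfolding Inf by eventually_elim (rule INF_greatest, simp)
qed

theorem lemmaB8:
  fixes M :: "'a measure" and \<nu> \<tau> :: "'a \<Rightarrow> enat" and T :: "'a \<Rightarrow> nat"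
  assumes "prob_space M"
    and "\<nu> \<in> M \<rightarrow>\<^sub>M count_space UNIV"
    and "\<tau> \<in> M \<rightarrow>\<^sub>M count_space UNIV"
    and "T \<in> M \<rightarrow>\<^sub>M count_space UNIV"
    and "dT_max M (delta (\<lambda>\<omega>. enat (T \<omega>)) \<nu>) < \<infinity>"
    and "prob_space.indep_var
           (uniform_measure M {\<omega> \<in> space M. \<nu> \<omega> < \<infinity> \<and> 0 \<le> delta \<tau> \<nu> \<omega>})
           borel (delta \<tau> \<nu>) borel (delta (\<lambda>\<omega>. enat (T \<omega>)) \<nu>)"
    and "measure M {\<omega> \<in> space M. \<nu> \<omega> < \<infinity> \<and> 0 \<le> delta \<tau> \<nu> \<omega>
            \<and> delta \<tau> \<nu> \<omega> \<le> dT_max M (delta (\<lambda>\<omega>. enat (T \<omega>)) \<nu>)} > 0"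
    and "measure M {\<omega> \<in> space M. \<nu> \<omega> < \<infinity> \<and> 0 \<le> delta \<tau> \<nu> \<omega>
            \<and> delta \<tau> \<nu> \<omega> \<le> delta (\<lambda>\<omega>. enat (T \<omega>)) \<nu> \<omega>} > 0"
  shows "cond_exp_event M (\<lambda>\<omega>. real_of_ereal (delta \<tau> \<nu> \<omega>))
            {\<omega> \<in> space M. \<nu> \<omega> < \<infinity> \<and> 0 \<le> delta \<tau> \<nu> \<omega>
               \<and> delta \<tau> \<nu> \<omega> \<le> dT_max M (delta (\<lambda>\<omega>. enat (T \<omega>)) \<nu>)}
       - cond_exp_event M (\<lambda>\<omega>. real_of_ereal (delta \<tau> \<nu> \<omega>))
            {\<omega> \<in> space M. \<nu> \<omega> < \<infinity> \<and> 0 \<le> delta \<tau> \<nu> \<omega>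
               \<and> delta \<tau> \<nu> \<omega> \<le> delta (\<lambda>\<omega>. enat (T \<omega>)) \<nu> \<omega>} \<ge> 0"
proof -
  interpret prob_space M by fact
  define X where "X = delta \<tau> \<nu>"
  define Y where "Y = delta (\<lambda>\<omega>. enat (T \<omega>)) \<nu>"
  define A where "A = {\<omega>\<in>space M. \<nu> \<omega> < \<infinity> \<and> 0 \<le> X \<omega>}"
  have "(\<lambda>\<omega>. enat (T \<omega>)) \<in> M \<rightarrow>\<^sub>M count_space UNIV"
    using assms(4) by simp
  then have [measurable]: "X \<in> borel_measurable M" "Y \<in> borel_measurable M"
    unfolding X_def Y_def using assms(2,3) by measurable
  have restrict: "A \<inter> {\<omega>\<in>space M. 0 \<le> X \<omega> \<and> X \<omega> \<le> Z \<omega>}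
      = {\<omega>\<in>space M. \<nu> \<omega> < \<infinity> \<and> 0 \<le> X \<omega> \<and> X \<omega> \<le> Z \<omega>}" for Z
    unfolding A_def by auto
  have "cond_exp_event M (\<lambda>\<omega>. real_of_ereal (X \<omega>)) (A \<inter> {\<omega>\<in>space M. 0 \<le> X \<omega> \<and> X \<omega> \<le> Y \<omega>})
      \<le> cond_exp_event M (\<lambda>\<omega>. real_of_ereal (X \<omega>)) (A \<inter> {\<omega>\<in>space M. 0 \<le> X \<omega> \<and> X \<omega> \<le> dT_max M Y})"
  proof (rule cond_exp_event_indep_truncation_le_within)
    show "A \<in> events"
      unfolding A_def using assms(2) by measurable
    show "prob_space.indep_var (uniform_measure M A) borel X borel Y"
      using assms(6) unfolding A_def X_def Y_def .
    show "AE \<omega> in M. Y \<omega> \<le> dT_max M Y"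
      using AE_le_dT_max[OF assms(1)] .
    show "dT_max M Y < \<infinity>"
      using assms(5) unfolding Y_def .
    show "0 < prob (A \<inter> {\<omega>\<in>space M. 0 \<le> X \<omega> \<and> X \<omega> \<le> dT_max M Y})"
      using assms(7) unfolding restrict X_def[symmetric] Y_def[symmetric] .
  qed
  then show ?thesis
    unfolding restrict by (simp add: X_def Y_def)
qed

end
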